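(* Let $(A,\star)$ be a pre-Lie algebra and define $x\circ y=x\star y+2y\star x$ for $x,y\in A$. Then $(A,\circ)$ is an anti-pre-Lie algebra if and only if $(A,\star)$ is a Novikov algebra. Moreover, in this case $(A,\circ)$ is an admissible Novikov algebra.
   Context: All vector spaces are finite-dimensional over a field $\mathbb F$ of characteristic $0$. A pre-Lie algebra is $(A,\star)$ with $(x\star y)\star z-x\star(y\star z)=(y\star x)\star z-y\star(x\star z)$ for all $x,y,z$; a Novikov algebra is a pre-Lie algebra with additionally $(x\star y)\star z=(x\star z)\star y$. For a bilinear operation $\circ$ write $[x,y]=x\circ y-y\circ x$. An anti-pre-Lie algebra is $(A,\circ)$ such that for all $x,y,z$: (i) $x\circ(y\circ z)-y\circ(x\circ z)=[y,x]\circ z$, and (ii) $[x,y]\circ z+[y,z]\circ x+[z,x]\circ y=0$. An admissible Novikov algebra is $(A,\circ)$ satisfying (i) and $2x\circ[y,z]=(x\circ y)\circ z-(x\circ z)\circ y$. *)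

theory Defs
  imports Main "HOL.Vector_Spaces"
begin

definition fd_vector_space :: "('k::field_char_0 \<Rightarrow> 'v::ab_group_add \<Rightarrow> 'v) \<Rightarrow> bool" where
  "fd_vector_space scale \<longleftrightarrow> (\<exists>B. finite_dimensional_vector_space scale B)"

definition bilinear_op :: "('k::field_char_0 \<Rightarrow> 'v::ab_group_add \<Rightarrow> 'v) \<Rightarrow> ('v \<Rightarrow> 'v \<Rightarrow> 'v) \<Rightarrow> bool" where
  "bilinear_op scale m \<longleftrightarrow>
     (\<forall>x. Vector_Spaces.linear scale scale (m x)) \<and>
     (\<forall>y. Vector_Spaces.linear scale scale (\<lambda>x. m x y))"

definition commutator :: "('v \<Rightarrow> 'v \<Rightarrow> 'v) \<Rightarrow> 'v \<Rightarrow> 'v \<Rightarrow> 'v::ab_group_add" where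
  "commutator m x y = m x y - m y x"

definition pre_lie :: "('v::ab_group_add \<Rightarrow> 'v \<Rightarrow> 'v) \<Rightarrow> bool" where
  "pre_lie m \<longleftrightarrow> (\<forall>x y z. m (m x y) z - m x (m y z) = m (m y x) z - m y (m x z))"

definition novikov :: "('v::ab_group_add \<Rightarrow> 'v \<Rightarrow> 'v) \<Rightarrow> bool" where
  "novikov m \<longleftrightarrow> pre_lie m \<and> (\<forall>x y z. m (m x y) z = m (m x z) y)"

definition anti_pre_lie :: "('v::ab_group_add \<Rightarrow> 'v \<Rightarrow> 'v) \<Rightarrow> bool" where
  "anti_pre_lie m \<longleftrightarrow>
     (\<forall>x y z. m x (m y z) - m y (m x z) = m (commutator m y x) z) \<and>
     (\<forall>x y z. m (commutator m x y) z + m (commutator m y z) x + m (commutator m z x) y = 0)"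

definition admissible_novikov :: "('k::field_char_0 \<Rightarrow> 'v \<Rightarrow> 'v) \<Rightarrow> ('v::ab_group_add \<Rightarrow> 'v \<Rightarrow> 'v) \<Rightarrow> bool" where
  "admissible_novikov scale m \<longleftrightarrow>
     (\<forall>x y z. m x (m y z) - m y (m x z) = m (commutator m y x) z) \<and>
     (\<forall>x y z. scale 2 (m x (commutator m y z)) = m (m x y) z - m (m x z) y)"

end

theory Submission
  imports Defs
begin

text \<open>Write P(x,y,z) = (x,y,z) - (y,x,z) for the pre-Lie defect of \<open>\<star>\<close> (with (x,y,z) its
  associator) and R(x,y,z) = (x \<star> y) \<star> z - (x \<star> z) \<star> y for its right-commutativity defect.
  Expanding \<open>x \<circ> y = x \<star> y + 2 y \<star> x\<close>, the defects of both anti-pre-Lie identities and of the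
  admissibility identity are integer combinations of P and R. Once P = 0, the first anti-pre-Lie
  defect at (y,z,x) is -6 R(x,y,z), so in characteristic 0 identity (i) for \<open>\<circ>\<close> is equivalent to
  R = 0, and R = 0 makes the remaining defects vanish as well.\<close>

locale biadditive_product = module scale
  for scale :: "'k::comm_ring_1 \<Rightarrow> 'v::ab_group_add \<Rightarrow> 'v" (infixr \<open>*s\<close> 75) +
  fixes star :: "'v \<Rightarrow> 'v \<Rightarrow> 'v" (infixl \<open>\<star>\<close> 70)
  assumes star_add_left: "(x + y) \<star> z = x \<star> z + y \<star> z"
    and star_add_right: "x \<star> (y + z) = x \<star> y + x \<star> z"
begin

lemma star_zero_left: "0 \<star> z = 0"
  and star_minus_left: "(- x) \<star> z = - (x \<star> z)"
  and star_diff_left: "(x - y) \<star> z = x \<star> z - y \<star> z"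
proof -
  interpret additive "\<lambda>x. x \<star> z"
    by standard (rule star_add_left)
  show "0 \<star> z = 0" "(- x) \<star> z = - (x \<star> z)" "(x - y) \<star> z = x \<star> z - y \<star> z"
    by (rule zero minus diff)+
qed

lemma star_zero_right: "x \<star> 0 = 0"
  and star_minus_right: "x \<star> (- y) = - (x \<star> y)"
  and star_diff_right: "x \<star> (y - z) = x \<star> y - x \<star> z"
proof -
  interpret additive "\<lambda>y. x \<star> y"
    by standard (rule star_add_right)
  show "x \<star> 0 = 0" "x \<star> (- y) = - (x \<star> y)" "x \<star> (y - z) = x \<star> y - x \<star> z"
    by (rule zero minus diff)+
qed

lemmas star_distrib =
  star_add_left star_add_right star_zero_left star_zero_right
  star_minus_left star_minus_right star_diff_left star_diff_right

lemma scale_numeral_Bit0: "numeral (Num.Bit0 n) *s x = numeral n *s x + numeral n *s x"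
  by (simp only: numeral_Bit0 scale_left_distrib)

lemma scale_numeral_Bit1: "numeral (Num.Bit1 n) *s x = numeral n *s x + numeral n *s x + x"
  by (simp only: numeral_Bit1 scale_left_distrib scale_one)

text \<open>Rewriting numeral multiples into iterated sums turns the defect identities below into
  identities of abelian groups, which \<open>algebra_simps\<close> normalizes.\<close>

lemmas scale_numeral_as_sum = scale_numeral_Bit0 scale_numeral_Bit1 numeral_One scale_one

definition circ :: "'v \<Rightarrow> 'v \<Rightarrow> 'v" (infixl \<open>\<diamond>\<close> 70)
  where "x \<diamond> y = x \<star> y + 2 *s (y \<star> x)"

definition pre_lie_defect :: "'v \<Rightarrow> 'v \<Rightarrow> 'v \<Rightarrow> 'v"
  where "pre_lie_defect x y z = (x \<star> y) \<star> z - x \<star> (y \<star> z) - ((y \<star> x) \<star> z - y \<star> (x \<star> z))"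

definition right_comm_defect :: "'v \<Rightarrow> 'v \<Rightarrow> 'v \<Rightarrow> 'v"
  where "right_comm_defect x y z = (x \<star> y) \<star> z - (x \<star> z) \<star> y"

lemma pre_lie_iff_defect: "pre_lie (\<star>) \<longleftrightarrow> (\<forall>x y z. pre_lie_defect x y z = 0)"
  by (simp add: pre_lie_def pre_lie_defect_def)

lemma novikov_iff_defects:
  "novikov (\<star>) \<longleftrightarrow> (\<forall>x y z. pre_lie_defect x y z = 0) \<and> (\<forall>x y z. right_comm_defect x y z = 0)"
  by (simp add: novikov_def pre_lie_iff_defect right_comm_defect_def)

lemma circ_left_defect:
  "x \<diamond> (y \<diamond> z) - y \<diamond> (x \<diamond> z) - commutator (\<diamond>) y x \<diamond> z =
     2 *s (pre_lie_defect y z x - pre_lie_defect x z y) - pre_lie_defect x y z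
     - 6 *s right_comm_defect z x y"
  unfolding circ_def commutator_def pre_lie_defect_def right_comm_defect_def
  by (simp add: star_distrib scale_numeral_as_sum algebra_simps)

lemma circ_cyclic_defect:
  "commutator (\<diamond>) x y \<diamond> z + commutator (\<diamond>) y z \<diamond> x + commutator (\<diamond>) z x \<diamond> y =
     2 *s (pre_lie_defect x y z - pre_lie_defect x z y + pre_lie_defect y z x)
     - 3 *s (right_comm_defect x y z - right_comm_defect y x z + right_comm_defect z x y)"
  unfolding circ_def commutator_def pre_lie_defect_def right_comm_defect_def
  by (simp add: star_distrib scale_numeral_as_sum algebra_simps)

lemma circ_admissible_defect:
  "2 *s (x \<diamond> commutator (\<diamond>) y z) - ((x \<diamond> y) \<diamond> z - (x \<diamond> z) \<diamond> y) =
     2 *s (pre_lie_defect x y z - pre_lie_defect x z y) - 4 *s pre_lie_defect y z x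
     - 3 *s right_comm_defect x y z"
  unfolding circ_def commutator_def pre_lie_defect_def right_comm_defect_def
  by (simp add: star_distrib scale_numeral_as_sum algebra_simps)

lemma anti_pre_lie_circ_if_novikov:
  assumes "novikov (\<star>)"
  shows "anti_pre_lie (\<diamond>)"
  using assms circ_left_defect circ_cyclic_defect
  unfolding anti_pre_lie_def novikov_iff_defects by simp

lemma circ_admissible_if_novikov:
  assumes "novikov (\<star>)"
  shows "2 *s (x \<diamond> commutator (\<diamond>) y z) = (x \<diamond> y) \<diamond> z - (x \<diamond> z) \<diamond> y"
  using assms circ_admissible_defect [of x y z]
  unfolding novikov_iff_defects by simp

lemma novikov_if_anti_pre_lie_circ:
  assumes "pre_lie (\<star>)" and "anti_pre_lie (\<diamond>)"
    and no_6_torsion: "\<And>v. 6 *s v = 0 \<Longrightarrow> v = 0"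
  shows "novikov (\<star>)"
proof -
  have "right_comm_defect x y z = 0" for x y z
  proof (rule no_6_torsion)
    show "6 *s right_comm_defect x y z = 0"
      using assms(1,2) circ_left_defect [of y z x]
      unfolding anti_pre_lie_def pre_lie_iff_defect by simp
  qed
  with assms(1) show ?thesis
    unfolding novikov_iff_defects pre_lie_iff_defect by blast
qed

end

theorem proposition3p5:
  fixes scale :: "'k::field_char_0 \<Rightarrow> 'v::ab_group_add \<Rightarrow> 'v"
    and star :: "'v \<Rightarrow> 'v \<Rightarrow> 'v"
  assumes "fd_vector_space scale"
    and "bilinear_op scale star"
    and "pre_lie star"
  defines "circ \<equiv> (\<lambda>x y. star x y + scale 2 (star y x))"
  shows "(anti_pre_lie circ \<longleftrightarrow> novikov star)
         \<and> (novikov star \<longrightarrow> admissible_novikov scale circ)"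
proof -
  have "vector_space scale"
    using assms(1) unfolding fd_vector_space_def finite_dimensional_vector_space_def by blast
  then interpret vector_space scale .
  interpret A: biadditive_product scale star
    using assms(2) by unfold_locales (simp_all add: bilinear_op_def linear_iff)
  have "circ = A.circ"
    by (intro ext) (simp add: circ_def A.circ_def)
  moreover have "v = 0" if "scale 6 v = 0" for v
    using that by simp
  ultimately show ?thesis
    using assms(3) A.anti_pre_lie_circ_if_novikov A.circ_admissible_if_novikov
      A.novikov_if_anti_pre_lie_circ
    unfolding admissible_novikov_def anti_pre_lie_def by blast
qed

end
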